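(* Let $b\ge 2$ be even and $n\ge 1$. Then $\{b^{n+i}+1 : i\in\{0,1,\dots,n\}\}$ is the minimal system of generators of $SC^{+}(b,n)$; in particular $e(SC^{+}(b,n))=n+1$.
   Context: For an even integer $b\ge2$ and $n\ge0$, $SC^{+}(b,n)=\langle\{b^{n+i}+1: i\in\mathbb{N}\}\rangle$, the submonoid of $(\mathbb{N},+)$ generated by these numbers (a numerical semigroup). The minimal system of generators of a numerical semigroup $S$ is the unique generating set no proper subset of which generates $S$; $e(S)$ is its cardinality. *)

theory Defs
  imports Main
begin

inductive_set monoid_gen :: "nat set \<Rightarrow> nat set" for A :: "nat set" where
  zero: "0 \<in> monoid_gen A"
| add: "a \<in> A \<Longrightarrow> x \<in> monoid_gen A \<Longrightarrow> a + x \<in> monoid_gen A"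

definition SCplus :: "nat \<Rightarrow> nat \<Rightarrow> nat set" where
  "SCplus b n = monoid_gen {b ^ (n + i) + 1 | i. True}"

definition is_minimal_generating_system :: "nat set \<Rightarrow> nat set \<Rightarrow> bool" where
  "is_minimal_generating_system G S \<longleftrightarrow>
     monoid_gen G = S \<and> (\<forall>H. H \<subset> G \<longrightarrow> monoid_gen H \<noteq> S)"

definition embedding_dim :: "nat set \<Rightarrow> nat" where
  "embedding_dim S = card (THE G. is_minimal_generating_system G S)"

end

theory Submission
  imports Defs "HOL-Number_Theory.Cong"
begin

text \<open>
  A minimal system of generators of a submonoid of \<open>\<nat>\<close> consists exactly of its atoms (nonzero
  elements that are not sums of two nonzero elements), so it is unique.

  The numbers \<open>a = b^n + 1\<close> and \<open>c = b^(n+1) + 1\<close> are coprime: a common divisor divides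
  \<open>b a - c = b - 1\<close>, hence \<open>a - 2\<close>, hence \<open>2\<close>, while \<open>c\<close> is odd. By Sylvester's bound every
  number \<open>\<ge> (a - 1)(c - 1) = b^(2n+1)\<close> is a nonnegative combination of \<open>a\<close> and \<open>c\<close>, which
  disposes of the generators \<open>b^(n+i) + 1\<close> with \<open>i > n\<close>.

  Modulo \<open>M = b^n\<close> every generator is \<open>1\<close> and exceeds \<open>M\<close>, so a sum of \<open>C\<close> generators is
  \<open>C\<close> modulo \<open>M\<close> and at least \<open>C (M + 1)\<close>. If such a sum is \<open>1\<close> modulo \<open>M\<close> and \<open>C > 1\<close>,
  then \<open>C \<ge> M + 1\<close> and the sum is at least \<open>(M + 1)^2 > b^(2n) + 1\<close>; so none of the
  \<open>b^(n+j) + 1\<close> with \<open>j \<le> n\<close> is a sum of other generators.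
\<close>

lemma monoid_gen_add: "x \<in> monoid_gen A \<Longrightarrow> y \<in> monoid_gen A \<Longrightarrow> x + y \<in> monoid_gen A"
  by (induction x rule: monoid_gen.induct) (auto simp: add.assoc intro: monoid_gen.add)

lemma monoid_gen_base: "a \<in> A \<Longrightarrow> a \<in> monoid_gen A"
  using monoid_gen.add[OF _ monoid_gen.zero] by simp

lemma monoid_gen_mult: "a \<in> A \<Longrightarrow> k * a \<in> monoid_gen A"
  by (induction k) (auto intro: monoid_gen.zero monoid_gen_add monoid_gen_base)

lemma monoid_gen_subset: "A \<subseteq> monoid_gen B \<Longrightarrow> monoid_gen A \<subseteq> monoid_gen B"
proof
  fix x assume A: "A \<subseteq> monoid_gen B" and x: "x \<in> monoid_gen A"
  from x show "x \<in> monoid_gen B"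
    by (induction x rule: monoid_gen.induct) (use A in \<open>auto intro: monoid_gen.zero monoid_gen_add\<close>)
qed

lemma monoid_gen_mono: "A \<subseteq> B \<Longrightarrow> monoid_gen A \<subseteq> monoid_gen B"
  by (rule monoid_gen_subset) (auto intro: monoid_gen_base)

lemma monoid_gen_remove_greater: "s \<in> monoid_gen G \<Longrightarrow> s < g \<Longrightarrow> s \<in> monoid_gen (G - {g})"
  by (induction s rule: monoid_gen.induct) (auto intro: monoid_gen.zero monoid_gen.add)

lemma is_minimal_generating_systemI:
  assumes "monoid_gen G = S" and "\<And>g. g \<in> G \<Longrightarrow> g \<notin> monoid_gen (G - {g})"
  shows "is_minimal_generating_system G S"
  unfolding is_minimal_generating_system_def
proof (intro conjI allI impI notI)
  fix H assume "H \<subset> G" and H: "monoid_gen H = S"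
  then obtain g where g: "g \<in> G" "H \<subseteq> G - {g}" by blast
  have "g \<in> monoid_gen H" using H assms(1) g(1) monoid_gen_base by blast
  then show False using monoid_gen_mono[OF g(2)] assms(2)[OF g(1)] by blast
qed (use assms in simp)

lemma minimal_generator_irredundant:
  assumes "is_minimal_generating_system G S" and "g \<in> G"
  shows "g \<notin> monoid_gen (G - {g})"
proof
  assume "g \<in> monoid_gen (G - {g})"
  then have "G \<subseteq> monoid_gen (G - {g})" by (auto intro: monoid_gen_base)
  then have "monoid_gen (G - {g}) = monoid_gen G"
    using monoid_gen_subset monoid_gen_mono[of "G - {g}" G] by blast
  moreover have "G - {g} \<subset> G" using assms(2) by blast
  ultimately show False using assms(1) unfolding is_minimal_generating_system_def by blast
qed

definition atoms :: "nat set \<Rightarrow> nat set" where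
  "atoms S = {s \<in> S. s \<noteq> 0 \<and> \<not> (\<exists>x y. x \<in> S \<and> y \<in> S \<and> x \<noteq> 0 \<and> y \<noteq> 0 \<and> s = x + y)}"

lemma minimal_generating_system_eq_atoms:
  assumes min: "is_minimal_generating_system G S"
  shows "G = atoms S"
proof -
  have S: "monoid_gen G = S"
    using min unfolding is_minimal_generating_system_def by blast
  have nonzero: "0 \<notin> G"
    using minimal_generator_irredundant[OF min] monoid_gen.zero by blast
  show ?thesis
  proof
    show "G \<subseteq> atoms S"
    proof
      fix g assume g: "g \<in> G"
      have "\<not> (x \<in> S \<and> y \<in> S \<and> x \<noteq> 0 \<and> y \<noteq> 0 \<and> g = x + y)" for x y
      proof
        assume xy: "x \<in> S \<and> y \<in> S \<and> x \<noteq> 0 \<and> y \<noteq> 0 \<and> g = x + y"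
        then have "x \<in> monoid_gen (G - {g})" "y \<in> monoid_gen (G - {g})"
          using monoid_gen_remove_greater[of _ G g] unfolding S by simp_all
        then have "g \<in> monoid_gen (G - {g})" using xy monoid_gen_add by simp
        then show False using minimal_generator_irredundant[OF min g] by blast
      qed
      moreover have "g \<in> S" using monoid_gen_base[OF g] unfolding S .
      moreover have "g \<noteq> 0" using g nonzero by metis
      ultimately show "g \<in> atoms S" unfolding atoms_def by auto
    qed
  next
    show "atoms S \<subseteq> G"
    proof
      fix s assume atom: "s \<in> atoms S"
      then have "s \<in> monoid_gen G" "s \<noteq> 0" unfolding atoms_def S by simp_all
      then obtain a x where s: "s = a + x" and a: "a \<in> G" and x: "x \<in> monoid_gen G"
        by (cases rule: monoid_gen.cases) simp_all
      have "x = 0"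
      proof (rule ccontr)
        assume "x \<noteq> 0"
        moreover have "a \<in> S" using monoid_gen_base[OF a] unfolding S .
        moreover have "a \<noteq> 0" using a nonzero by metis
        moreover have "x \<in> S" using x unfolding S .
        ultimately show False using atom s unfolding atoms_def by blast
      qed
      then show "s \<in> G" using s a by simp
    qed
  qed
qed

lemma embedding_dim_eq_card:
  assumes "is_minimal_generating_system G S"
  shows "embedding_dim S = card G"
proof -
  have "(THE G. is_minimal_generating_system G S) = G"
    using assms minimal_generating_system_eq_atoms by (intro the_equality) blast+
  then show ?thesis unfolding embedding_dim_def by simp
qed

lemma sylvester_representable:
  fixes a c N :: nat
  assumes "coprime a c" "a > 0" "c > 0" "(a - 1) * (c - 1) \<le> N"
  shows "\<exists>u v. N = u * a + v * c"
proof -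
  obtain x where "[a * x = N] (mod c)"
    using cong_solve_dvd_nat[of a c N] assms(1) by auto
  define u where "u = x mod c"
  have "[u * a = x * a] (mod c)" unfolding u_def cong_def by (rule mod_mult_left_eq)
  then have u: "[u * a = N] (mod c)" "u < c"
    using \<open>[a * x = N] (mod c)\<close> assms(3) cong_trans unfolding u_def
    by (auto simp: mult.commute)
  have "u * a \<le> (c - 1) * a" using u(2) by (intro mult_le_mono1) simp
  also have "\<dots> = (a - 1) * (c - 1) + (c - 1)" using assms(2) by (cases a) auto
  finally have ua: "u * a < N + c" using assms(3,4) by linarith
  have "u * a \<le> N"
  proof (rule ccontr)
    assume "\<not> u * a \<le> N"
    then obtain q where "u * a = q * c + N" "q \<noteq> 0"
      using u(1) cong_le_nat[of N "u * a" c] by auto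
    moreover have "c \<le> q * c" using \<open>q \<noteq> 0\<close> by simp
    ultimately show False using ua by linarith
  qed
  then obtain v where "N = v * c + u * a" using u(1) cong_le_nat cong_sym by blast
  then show ?thesis by (intro exI[of _ u] exI[of _ v]) simp
qed

lemma coprime_power_Suc_plus_one:
  fixes b n :: nat
  assumes "even b"
  shows "coprime (b ^ n + 1) (b ^ Suc n + 1)"
proof (cases "b = 0")
  case False
  define d where "d = gcd (b ^ n + 1) (b ^ Suc n + 1)"
  have d: "d dvd b ^ n + 1" "d dvd b ^ Suc n + 1" unfolding d_def by auto
  have "b * (b ^ n + 1) = (b ^ Suc n + 1) + (b - 1)" using False by simp
  then have "d dvd (b ^ Suc n + 1) + (b - 1)" using dvd_mult[OF d(1), of b] by metis
  then have "d dvd b - 1" using d(2) by (simp only: dvd_add_right_iff)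
  then have "[b = 1] (mod d)" using False by (simp add: cong_altdef_nat cong_sym_eq)
  then have "[b ^ n + 1 = 2] (mod d)"
    using cong_add[OF cong_pow[of b 1 d n] cong_refl[of 1]] by (simp add: numeral_2_eq_2)
  then have "d dvd 2" using d(1) cong_dvd_iff by blast
  then have "d \<le> 2" by (simp add: dvd_imp_le)
  moreover have "odd d"
  proof -
    have "odd (b ^ Suc n + 1)" using assms by simp
    then show ?thesis using d(2) by (meson dvd_trans)
  qed
  then have "d \<noteq> 0" "d \<noteq> 2" by (metis even_zero, metis even_numeral)
  ultimately have "d = 1" by linarith
  then show ?thesis unfolding d_def by (simp add: coprime_iff_gcd_eq_1)
qed simp

text \<open>\<open>C\<close> is the number of summands in a representation of \<open>s\<close> by elements of \<open>A\<close>.\<close>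

lemma monoid_gen_summand_count:
  fixes M L :: nat
  assumes "\<forall>a\<in>A. a mod M = 1 \<and> L \<le> a" and "s \<in> monoid_gen A"
  shows "\<exists>C. s mod M = C mod M \<and> C * L \<le> s \<and> (C = 0 \<longrightarrow> s = 0) \<and> (C = 1 \<longrightarrow> s \<in> A)"
  using assms(2)
proof (induction s rule: monoid_gen.induct)
  case zero
  show ?case by (intro exI[of _ 0]) simp
next
  case (add a x)
  then obtain C where C: "x mod M = C mod M" "C * L \<le> x" "C = 0 \<longrightarrow> x = 0" "C = 1 \<longrightarrow> x \<in> A"
    by blast
  have a: "a mod M = 1" "L \<le> a" using assms(1) add(1) by auto
  have "(a + x) mod M = (a mod M + x mod M) mod M" by (simp add: mod_add_eq)
  also have "\<dots> = (1 + C) mod M" using a(1) C(1) by (simp add: mod_Suc_eq)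
  finally have "(a + x) mod M = Suc C mod M" by simp
  then show ?case using a C add(1) by (intro exI[of _ "Suc C"]) auto
qed

lemma monoid_gen_small_congruent_one:
  fixes M L s :: nat
  assumes "\<forall>a\<in>A. a mod M = 1 \<and> L \<le> a" and "s \<in> monoid_gen A"
    and "s mod M = 1" and "s < (M + 1) * L"
  shows "s \<in> A"
proof -
  obtain C where C: "s mod M = C mod M" "C * L \<le> s" "C = 1 \<longrightarrow> s \<in> A"
    using monoid_gen_summand_count[OF assms(1,2)] by blast
  have C_eq: "C = M * (C div M) + 1" using C(1) assms(3) by (metis mult_div_mod_eq)
  have "C * L < (M + 1) * L" using C(2) assms(4) by linarith
  then have "C < M + 1" by (rule mult_less_cancel2[THEN iffD1, THEN conjunct2])
  have "C div M = 0"
  proof (rule ccontr)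
    assume "C div M \<noteq> 0"
    then have "M \<le> M * (C div M)" by simp
    then show False using C_eq \<open>C < M + 1\<close> by linarith
  qed
  then have "C = 1" using C_eq by simp
  then show ?thesis using C(3) by blast
qed

lemma SCplus_eq_monoid_gen_initial:
  fixes b n :: nat
  assumes "even b" and "n \<ge> 1"
  shows "monoid_gen {b ^ (n + i) + 1 | i. i \<in> {0..n}} = SCplus b n"
proof -
  define G where "G = {b ^ (n + i) + 1 | i. i \<in> {0..n}}"
  define a c where "a = b ^ n + 1" and "c = b ^ Suc n + 1"
  have ac: "a \<in> G" "c \<in> G" unfolding G_def a_def c_def using assms(2) by force+
  have "coprime a c" unfolding a_def c_def using assms(1) by (rule coprime_power_Suc_plus_one)
  have "b ^ (n + i) + 1 \<in> monoid_gen G" for i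
  proof (cases "i \<le> n")
    case True
    then show ?thesis unfolding G_def by (intro monoid_gen_base) auto
  next
    case False
    have "(a - 1) * (c - 1) = b ^ (n + Suc n)" unfolding a_def c_def by (simp add: power_add)
    also have "\<dots> \<le> b ^ (n + i)"
      using False by (cases "b = 0") (simp_all add: power_increasing del: power_Suc)
    finally obtain u v where "b ^ (n + i) + 1 = u * a + v * c"
      using sylvester_representable[OF \<open>coprime a c\<close>] unfolding a_def c_def
      by (metis le_SucI zero_less_Suc Suc_eq_plus1)
    then show ?thesis using monoid_gen_add monoid_gen_mult ac by metis
  qed
  then have "monoid_gen {b ^ (n + i) + 1 | i. True} \<subseteq> monoid_gen G"
    by (intro monoid_gen_subset) blast
  moreover have "monoid_gen G \<subseteq> monoid_gen {b ^ (n + i) + 1 | i. True}"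
    unfolding G_def by (intro monoid_gen_mono) blast
  ultimately show ?thesis unfolding SCplus_def G_def by blast
qed

lemma SCplus_initial_generator_irreducible:
  fixes b n j :: nat
  assumes "b \<ge> 2" and "n \<ge> 1" and "j \<le> n"
    and "A \<subseteq> {b ^ (n + i) + 1 | i. True}" and "b ^ (n + j) + 1 \<in> monoid_gen A"
  shows "b ^ (n + j) + 1 \<in> A"
proof -
  define M where "M = b ^ n"
  have "b ^ 1 \<le> b ^ n" using assms(1,2) by (intro power_increasing) auto
  then have "M \<ge> 2" unfolding M_def using assms(1) by simp
  then have mod_one: "(M * k + 1) mod M = 1" for k by (simp add: mod_Suc)
  have split: "b ^ (n + i) + 1 = M * b ^ i + 1" for i unfolding M_def by (simp add: power_add)
  have generators: "\<forall>a\<in>A. a mod M = 1 \<and> M + 1 \<le> a"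
  proof
    fix a assume "a \<in> A"
    then obtain i where "a = M * b ^ i + 1" using assms(4) split by auto
    moreover have "M \<le> M * b ^ i" using assms(1) by simp
    ultimately show "a mod M = 1 \<and> M + 1 \<le> a" using mod_one by simp
  qed
  have "b ^ j \<le> M" unfolding M_def using assms(1,3) by (simp add: power_increasing)
  then have "M * b ^ j \<le> M * M" by simp
  moreover have "(M + 1) * (M + 1) = M * M + 2 * M + 1" by (simp add: algebra_simps)
  ultimately have "b ^ (n + j) + 1 < (M + 1) * (M + 1)" using \<open>M \<ge> 2\<close> unfolding split by linarith
  then show ?thesis
    using monoid_gen_small_congruent_one[OF generators assms(5)] mod_one split by metis
qed

theorem mainTheorem15:
  fixes b n :: nat
  assumes "even b" and "b \<ge> 2" and "n \<ge> 1"
  shows "is_minimal_generating_system {b ^ (n + i) + 1 | i. i \<in> {0..n}} (SCplus b n)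
         \<and> embedding_dim (SCplus b n) = n + 1"
proof -
  define G where "G = {b ^ (n + i) + 1 | i. i \<in> {0..n}}"
  have min: "is_minimal_generating_system G (SCplus b n)"
  proof (rule is_minimal_generating_systemI)
    show "monoid_gen G = SCplus b n"
      unfolding G_def using assms(1,3) by (rule SCplus_eq_monoid_gen_initial)
  next
    fix g assume "g \<in> G"
    then obtain j where j: "j \<le> n" and g: "g = b ^ (n + j) + 1" unfolding G_def by auto
    have "G - {g} \<subseteq> {b ^ (n + i) + 1 | i. True}" unfolding G_def by blast
    from SCplus_initial_generator_irreducible[OF assms(2,3) j this]
    show "g \<notin> monoid_gen (G - {g})" unfolding g by blast
  qed
  have "G = (\<lambda>i. b ^ (n + i) + 1) ` {0..n}" unfolding G_def by auto
  moreover have "inj_on (\<lambda>i. b ^ (n + i) + 1) {0..n}"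
    using assms(2) by (simp add: inj_on_def)
  ultimately have "card G = n + 1" by (simp add: card_image)
  then have "embedding_dim (SCplus b n) = n + 1" using embedding_dim_eq_card[OF min] by simp
  with min show ?thesis unfolding G_def by blast
qed

end
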